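(* Let $\mathcal{K}\subseteq\mathbb{R}^n$ be a convex body symmetric with respect to a point $o$, let $m\ge0$ be an integer, and let $\mathcal{H}$ be a hyperplane through $o$. Then $\psi_m(\mathcal{K})\ge\psi_m\bigl(\mathcal{S}_{\mathcal{H}}(\mathcal{K})\bigr)$.
   Context: A convex body is a compact convex set with nonempty interior; $\mathcal{K}$ is $o$-symmetric if $x\in\mathcal{K}$ implies $2o-x\in\mathcal{K}$. For an $o$-symmetric convex body $\mathcal{K}$, $\psi_m(\mathcal{K})=\sup\{\operatorname{vol}\mathcal{P}/\operatorname{vol}\mathcal{K}\colon\mathcal{P}\subset\mathcal{K}$ an $o$-symmetric convex polytope with at most $m$ vertices$\}$. Steiner symmetral: write each point of $\mathbb{R}^n$ as $(x,t)$ where $x$ is its orthogonal projection onto $\mathcal{H}$ and $t$ its signed distance from $\mathcal{H}$. Let $\operatorname{proj}(\mathcal{K})$ be the orthogonal projection of $\mathcal{K}$ onto $\mathcal{H}$, and for $x\in\operatorname{proj}(\mathcal{K})$ let $\mathcal{K}^+(x)=\max\{t\colon(x,t)\in\mathcal{K}\}$, $\mathcal{K}^-(x)=\min\{t\colon(x,t)\in\mathcal{K}\}$. Then $\mathcal{S}_{\mathcal{H}}(\mathcal{K})=\{(x,t)\colon x\in\operatorname{proj}(\mathcal{K}),\ |t|\le\tfrac12(\mathcal{K}^+(x)-\mathcal{K}^-(x))\}$, which is an $o$-symmetric convex body. *)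

theory Defs
  imports "HOL-Analysis.Analysis"
begin

definition convex_body :: "'a::euclidean_space set \<Rightarrow> bool" where
  "convex_body K \<longleftrightarrow> compact K \<and> convex K \<and> interior K \<noteq> {}"

definition sym_about :: "'a::euclidean_space \<Rightarrow> 'a set \<Rightarrow> bool" where
  "sym_about c K \<longleftrightarrow> (\<forall>x\<in>K. 2 *\<^sub>R c - x \<in> K)"

definition vertices :: "'a::euclidean_space set \<Rightarrow> 'a set" where
  "vertices P = {v. v extreme_point_of P}"

definition psi :: "nat \<Rightarrow> 'a::euclidean_space \<Rightarrow> 'a set \<Rightarrow> real" where
  "psi m c K = Sup {measure lebesgue P / measure lebesgue K | P.
      polytope P \<and> sym_about c P \<and> P \<subseteq> K \<and> finite (vertices P) \<and> card (vertices P) \<le> m}"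

definition hyperplane_through :: "'a::euclidean_space \<Rightarrow> 'a \<Rightarrow> 'a set" where
  "hyperplane_through c a = {y. a \<bullet> (y - c) = 0}"

text \<open>Steiner symmetral w.r.t. the hyperplane through o (c) with normal a:
  u = unit normal, proj y = y - ((y - c) . u) u, signed distance t = (y - c) . u,
  point (x,t) = x + t u.\<close>
definition steiner_sym :: "'a::euclidean_space \<Rightarrow> 'a \<Rightarrow> 'a set \<Rightarrow> 'a set" where
  "steiner_sym c a K =
    (let u = a /\<^sub>R norm a;
         proj = (\<lambda>y. y - ((y - c) \<bullet> u) *\<^sub>R u);
         Kp = (\<lambda>x. Sup {t. x + t *\<^sub>R u \<in> K});
         Km = (\<lambda>x. Inf {t. x + t *\<^sub>R u \<in> K})
     in {x + t *\<^sub>R u | x t. x \<in> proj ` K \<and> \<bar>t\<bar> \<le> (Kp x - Km x) / 2})"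

end

theory Submission
  imports Defs
begin

(* Let u be the unit normal of H and, for x in H, let mid x be the midpoint of the chord of K
   on the line x + R u.  Take an o-symmetric polytope P in the symmetral with vertex set V.
   Pushing every vertex v along u by mid (proj v), and doing the same after first reflecting
   v in H, gives two point sets in K that are again o-symmetric (mid is odd because K is
   o-symmetric) and have at most |V| points; their hulls Q1, Q2 are admissible for K.
   On each line parallel to u, the two endpoints of the chord of P are convex combinations of V,
   and the same convex combinations produce chords of Q1 and Q2 whose lengths add up to at
   least twice the chord of P.  By Cavalieri vol Q1 + vol Q2 >= 2 vol P, so one of them has
   volume at least vol P; together with vol K <= vol S_H(K) this bounds the ratios for the
   symmetral by those for K. *)

section \<open>Line fibres and Cavalieri's principle\<close>

definition line_fiber :: "'a::real_vector \<Rightarrow> 'a set \<Rightarrow> 'a \<Rightarrow> real set" where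
  "line_fiber u A z = {s. z + s *\<^sub>R u \<in> A}"

lemma indicator_line_fiber: "indicator (line_fiber u A z) s = indicator A (z + s *\<^sub>R u)"
  by (simp add: line_fiber_def indicator_def)

lemma sets_borel_line_fiber [measurable]:
  fixes u :: "'a::euclidean_space"
  assumes [measurable]: "A \<in> sets borel"
  shows "line_fiber u A z \<in> sets borel"
  unfolding line_fiber_def by measurable

lemma emeasure_line_fiber:
  fixes u :: "'a::euclidean_space"
  assumes [measurable]: "A \<in> sets borel"
  shows "emeasure lborel (line_fiber u A z) = (\<integral>\<^sup>+s. indicator A (z + s *\<^sub>R u) \<partial>lborel)"
  by (simp flip: indicator_line_fiber)

lemma borel_measurable_emeasure_line_fiber [measurable]:
  fixes u :: "'a::euclidean_space"
  assumes [measurable]: "A \<in> sets borel"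
  shows "(\<lambda>z. emeasure lborel (line_fiber u A z)) \<in> borel_measurable lborel"
  unfolding emeasure_line_fiber[OF assms] by measurable

text \<open>The slab \<open>0 \<le> z \<bullet> u \<le> 1\<close> is a fundamental domain for the translations along \<open>u\<close>;
  two applications of Tonelli turn integration of the fibre lengths over it into the volume.\<close>
lemma emeasure_eq_nn_integral_line_fibers:
  fixes u :: "'a::euclidean_space"
  assumes u: "norm u = 1" and [measurable]: "A \<in> sets borel"
  shows "emeasure lborel A =
    (\<integral>\<^sup>+z. indicator {z. 0 \<le> z \<bullet> u \<and> z \<bullet> u \<le> 1} z * emeasure lborel (line_fiber u A z) \<partial>lborel)"
proof -
  define Z where "Z = {z::'a. 0 \<le> z \<bullet> u \<and> z \<bullet> u \<le> 1}"
  have [measurable]: "Z \<in> sets borel" unfolding Z_def by measurable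
  have "(\<integral>\<^sup>+z. indicator Z z * emeasure lborel (line_fiber u A z) \<partial>lborel)
      = (\<integral>\<^sup>+z. (\<integral>\<^sup>+s. indicator Z z * indicator A (z + s *\<^sub>R u) \<partial>lborel) \<partial>lborel)"
    by (simp add: emeasure_line_fiber nn_integral_cmult)
  also have "\<dots> = (\<integral>\<^sup>+s. (\<integral>\<^sup>+z. indicator Z z * indicator A (z + s *\<^sub>R u) \<partial>lborel) \<partial>(lborel::real measure))"
    by (rule lborel_pair.Fubini'[symmetric]) measurable
  also have "\<dots> = (\<integral>\<^sup>+s. (\<integral>\<^sup>+y. indicator Z (y - s *\<^sub>R u) * indicator A y \<partial>lborel) \<partial>(lborel::real measure))"
  proof (rule nn_integral_cong)
    fix s :: real
    have "(\<integral>\<^sup>+y. indicator Z (y - s *\<^sub>R u) * indicator A y \<partial>lborel)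
       = (\<integral>\<^sup>+y. indicator Z (y - s *\<^sub>R u) * indicator A y \<partial>(distr lborel borel ((+) (s *\<^sub>R u))))"
      by (simp add: lborel_distr_plus)
    also have "\<dots> = (\<integral>\<^sup>+z. indicator Z z * indicator A (z + s *\<^sub>R u) \<partial>lborel)"
      by (subst nn_integral_distr) (auto simp: add.commute)
    finally show "(\<integral>\<^sup>+z. indicator Z z * indicator A (z + s *\<^sub>R u) \<partial>lborel)
       = (\<integral>\<^sup>+y. indicator Z (y - s *\<^sub>R u) * indicator A y \<partial>lborel)" ..
  qed
  also have "\<dots> = (\<integral>\<^sup>+y. (\<integral>\<^sup>+s. indicator Z (y - s *\<^sub>R u) * indicator A y \<partial>(lborel::real measure)) \<partial>lborel)"
    by (rule lborel_pair.Fubini') measurable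
  also have "\<dots> = (\<integral>\<^sup>+y. indicator A y \<partial>lborel)"
  proof (rule nn_integral_cong)
    fix y :: 'a
    have "u \<bullet> u = 1" using u by (simp add: norm_eq_1)
    then have "(\<lambda>s. indicator Z (y - s *\<^sub>R u)) = (indicator {y \<bullet> u - 1 .. y \<bullet> u} :: real \<Rightarrow> ennreal)"
      by (auto simp: Z_def inner_diff_left split: split_indicator)
    then have "(\<integral>\<^sup>+s. indicator Z (y - s *\<^sub>R u) \<partial>(lborel::real measure)) = 1"
      by simp
    then show "(\<integral>\<^sup>+s. indicator Z (y - s *\<^sub>R u) * indicator A y \<partial>lborel) = indicator A y"
      by (simp add: nn_integral_multc)
  qed
  finally show ?thesis unfolding Z_def by simp
qed

lemma emeasure_le_by_line_fibers:
  fixes u :: "'a::euclidean_space" and k :: ennreal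
  assumes u: "norm u = 1" and [measurable]: "A \<in> sets borel" "B \<in> sets borel" "C \<in> sets borel"
    and fibers: "\<And>z. k * emeasure lborel (line_fiber u C z)
       \<le> emeasure lborel (line_fiber u A z) + emeasure lborel (line_fiber u B z)"
  shows "k * emeasure lborel C \<le> emeasure lborel A + emeasure lborel B"
proof -
  define Z where "Z = {z::'a. 0 \<le> z \<bullet> u \<and> z \<bullet> u \<le> 1}"
  note fibers_integral = emeasure_eq_nn_integral_line_fibers[OF u, folded Z_def]
  have [measurable]: "Z \<in> sets borel" unfolding Z_def by measurable
  have "k * emeasure lborel C = (\<integral>\<^sup>+z. k * (indicator Z z * emeasure lborel (line_fiber u C z)) \<partial>lborel)"
    by (simp add: fibers_integral nn_integral_cmult)
  also have "\<dots> \<le> (\<integral>\<^sup>+z. indicator Z z * emeasure lborel (line_fiber u A z)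
                        + indicator Z z * emeasure lborel (line_fiber u B z) \<partial>lborel)"
    by (intro nn_integral_mono) (use fibers in \<open>auto simp: indicator_def\<close>)
  also have "\<dots> = emeasure lborel A + emeasure lborel B"
    by (simp add: fibers_integral nn_integral_add)
  finally show ?thesis .
qed

lemma emeasure_mono_line_fibers:
  fixes u :: "'a::euclidean_space"
  assumes "norm u = 1" and [measurable]: "A \<in> sets borel" "C \<in> sets borel"
    and "\<And>z. emeasure lborel (line_fiber u C z) \<le> emeasure lborel (line_fiber u A z)"
  shows "emeasure lborel C \<le> emeasure lborel A"
  using emeasure_le_by_line_fibers[of u A "{}" C 1] assms by (simp add: line_fiber_def)

lemma convex_line_fiber:
  assumes "convex A"
  shows "convex (line_fiber u A z)"
proof -
  have "line_fiber u A z = (\<lambda>s. s *\<^sub>R u) -` ((\<lambda>y. y - z) ` A)"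
    by (force simp: line_fiber_def)
  then show ?thesis
    using assms by (simp add: convex_linear_vimage convex_translation_subtract linear_scaleR_left)
qed

lemma compact_line_fiber:
  fixes u :: "'a::euclidean_space"
  assumes "compact A" "u \<noteq> 0"
  shows "compact (line_fiber u A z)"
proof -
  have "line_fiber u A z \<subseteq> (\<lambda>y. ((y - z) \<bullet> u) / (u \<bullet> u)) ` A"
  proof
    fix s assume "s \<in> line_fiber u A z"
    moreover have "s = (((z + s *\<^sub>R u) - z) \<bullet> u) / (u \<bullet> u)"
      using assms(2) by simp
    ultimately show "s \<in> (\<lambda>y. ((y - z) \<bullet> u) / (u \<bullet> u)) ` A"
      unfolding line_fiber_def by blast
  qed
  moreover have "compact ((\<lambda>y. ((y - z) \<bullet> u) / (u \<bullet> u)) ` A)"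
    using assms by (intro compact_continuous_image continuous_intros) auto
  ultimately have "bounded (line_fiber u A z)"
    by (meson bounded_subset compact_imp_bounded)
  moreover have "closed (line_fiber u A z)"
    using continuous_closed_vimage[of A "\<lambda>s. z + s *\<^sub>R u"] compact_imp_closed[OF assms(1)]
    by (simp add: line_fiber_def vimage_def)
  ultimately show ?thesis by (simp add: compact_eq_bounded_closed)
qed

lemma line_fiber_Icc:
  fixes u :: "'a::euclidean_space"
  assumes "compact A" "convex A" "u \<noteq> 0" "line_fiber u A z \<noteq> {}"
  obtains lo hi where "line_fiber u A z = {lo..hi}" "lo \<le> hi"
proof -
  obtain lo hi where "line_fiber u A z = {lo..hi}"
    using connected_compact_interval_1 convex_connected convex_line_fiber compact_line_fiber assms
    by metis
  with assms(4) that show thesis by simp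
qed

lemma dist_le_emeasure_line_fiber:
  fixes u :: "'a::euclidean_space"
  assumes "convex A" "A \<in> sets borel" "s \<in> line_fiber u A z" "t \<in> line_fiber u A z"
  shows "ennreal \<bar>s - t\<bar> \<le> emeasure lborel (line_fiber u A z)"
proof -
  have "closed_segment s t \<subseteq> line_fiber u A z"
    using assms convex_line_fiber[OF assms(1)] by (simp add: closed_segment_subset)
  then have "emeasure lborel (closed_segment s t) \<le> emeasure lborel (line_fiber u A z)"
    by (intro emeasure_mono) (use assms(2) in measurable)
  then show ?thesis
    by (simp add: closed_segment_eq_real_ivl abs_real_def split: if_splits)
qed

section \<open>Point-symmetric polytopes\<close>

lemma sym_about_mem_iff:
  assumes "sym_about c K"
  shows "2 *\<^sub>R c - y \<in> K \<longleftrightarrow> y \<in> K"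
proof -
  have "\<And>y. y \<in> K \<Longrightarrow> 2 *\<^sub>R c - y \<in> K"
    using assms by (simp add: sym_about_def)
  from this[of y] this[of "2 *\<^sub>R c - y"] show ?thesis by auto
qed

definition sym_polytope :: "nat \<Rightarrow> 'a::euclidean_space \<Rightarrow> 'a set \<Rightarrow> bool" where
  "sym_polytope m c P \<longleftrightarrow>
    polytope P \<and> sym_about c P \<and> finite (vertices P) \<and> card (vertices P) \<le> m"

lemma psi_eq_Sup_sym_polytope:
  "psi m c K = Sup {measure lebesgue P / measure lebesgue K | P. sym_polytope m c P \<and> P \<subseteq> K}"
  unfolding psi_def sym_polytope_def by (intro arg_cong[where f = Sup] Collect_cong) auto

lemma sym_polytope_empty: "sym_polytope m c {}"
  by (simp add: sym_polytope_def sym_about_def vertices_def polytope_empty)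

lemma point_reflect_mem_open_segment:
  "2 *\<^sub>R c - x \<in> open_segment a b \<Longrightarrow> x \<in> open_segment (2 *\<^sub>R c - a) (2 *\<^sub>R c - b)"
  by (auto simp: in_segment algebra_simps)

lemma extreme_point_of_point_reflect:
  assumes "sym_about c P" "v extreme_point_of P"
  shows "(2 *\<^sub>R c - v) extreme_point_of P"
proof -
  have "2 *\<^sub>R c - v \<notin> open_segment a b" if "a \<in> P" "b \<in> P" for a b
  proof
    assume "2 *\<^sub>R c - v \<in> open_segment a b"
    then have "v \<in> open_segment (2 *\<^sub>R c - a) (2 *\<^sub>R c - b)"
      by (rule point_reflect_mem_open_segment)
    moreover have "2 *\<^sub>R c - a \<in> P" "2 *\<^sub>R c - b \<in> P"
      using that assms(1) by (simp_all add: sym_about_def)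
    ultimately show False
      using assms(2) by (simp add: extreme_point_of_def)
  qed
  moreover have "2 *\<^sub>R c - v \<in> P"
    using assms by (simp add: sym_about_def extreme_point_of_def)
  ultimately show ?thesis
    by (simp add: extreme_point_of_def)
qed

lemma sym_about_convex_hull:
  assumes "\<And>w. w \<in> W \<Longrightarrow> 2 *\<^sub>R c - w \<in> W"
  shows "sym_about c (convex hull W)"
proof -
  have "(\<lambda>x. 2 *\<^sub>R c - x) ` (convex hull W) = convex hull ((\<lambda>x. 2 *\<^sub>R c - x) ` W)"
    using convex_hull_affinity[of "2 *\<^sub>R c" "-1" W] by simp
  also have "\<dots> \<subseteq> convex hull W"
    using assms by (intro hull_mono) auto
  finally show ?thesis
    by (auto simp: sym_about_def)
qed

lemma sym_polytope_convex_hull: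
  fixes W :: "'a::euclidean_space set"
  assumes "finite W" "card W \<le> m" "\<And>w. w \<in> W \<Longrightarrow> 2 *\<^sub>R c - w \<in> W"
  shows "sym_polytope m c (convex hull W)"
proof -
  have sub: "vertices (convex hull W) \<subseteq> W"
    by (auto simp: vertices_def dest: extreme_point_of_convex_hull)
  have "finite (vertices (convex hull W))"
    using finite_subset[OF sub assms(1)] .
  moreover have "card (vertices (convex hull W)) \<le> m"
    using card_mono[OF assms(1) sub] assms(2) by linarith
  moreover have "polytope (convex hull W)"
    using assms(1) by (rule polytope_convex_hull)
  ultimately show ?thesis
    unfolding sym_polytope_def using sym_about_convex_hull[OF assms(3)] by blast
qed

lemma sym_polytope_vertices:
  assumes "sym_polytope m c P"
  shows "finite (vertices P)" "card (vertices P) \<le> m" "convex hull (vertices P) = P"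
    and "\<And>v. v \<in> vertices P \<Longrightarrow> 2 *\<^sub>R c - v \<in> vertices P"
proof -
  show "finite (vertices P)" "card (vertices P) \<le> m"
    using assms by (simp_all add: sym_polytope_def)
  obtain W where W: "finite W" "P = convex hull W"
    using assms by (auto simp: sym_polytope_def polytope_def)
  then show "convex hull (vertices P) = P"
    using Krein_Milman_polytope[OF W(1), symmetric] by (simp add: vertices_def)
  show "2 *\<^sub>R c - v \<in> vertices P" if "v \<in> vertices P" for v
    using that assms extreme_point_of_point_reflect by (auto simp: sym_polytope_def vertices_def)
qed

section \<open>Shearing a polytope along a direction\<close>

lemma convex_combination_shear_mem:
  assumes "finite V" "\<forall>v\<in>V. 0 \<le> l v" "sum l V = 1"
  shows "(\<Sum>v\<in>V. l v *\<^sub>R v) + (\<Sum>v\<in>V. l v * g v) *\<^sub>R u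
    \<in> convex hull ((\<lambda>v. v + g v *\<^sub>R u) ` V)"
proof -
  have "(\<Sum>v\<in>V. l v *\<^sub>R (v + g v *\<^sub>R u)) \<in> convex hull ((\<lambda>v. v + g v *\<^sub>R u) ` V)"
    by (rule convex_sum) (use assms in \<open>auto intro: hull_inc\<close>)
  moreover have "(\<Sum>v\<in>V. l v *\<^sub>R (v + g v *\<^sub>R u)) = (\<Sum>v\<in>V. l v *\<^sub>R v) + (\<Sum>v\<in>V. l v * g v) *\<^sub>R u"
    by (simp add: scaleR_add_right sum.distrib scaleR_sum_left)
  ultimately show ?thesis by simp
qed

lemma line_fiber_convex_hull_shears:
  fixes V :: "'a::euclidean_space set"
  assumes "finite V" "norm u = 1" "z + s *\<^sub>R u \<in> convex hull V"
  obtains \<alpha> where "s + \<alpha> \<in> line_fiber u (convex hull ((\<lambda>v. v + g v *\<^sub>R u) ` V)) z"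
    and "\<alpha> - s - 2 * ((z - c) \<bullet> u)
      \<in> line_fiber u (convex hull ((\<lambda>v. v + (g v - 2 * ((v - c) \<bullet> u)) *\<^sub>R u) ` V)) z"
proof -
  obtain l where l: "\<forall>v\<in>V. 0 \<le> l v" "sum l V = 1" "(\<Sum>v\<in>V. l v *\<^sub>R v) = z + s *\<^sub>R u"
    using assms(1,3) by (auto simp: convex_hull_finite)
  define \<alpha> where "\<alpha> = (\<Sum>v\<in>V. l v * g v)"
  have "(\<Sum>v\<in>V. l v * ((v - c) \<bullet> u)) = (\<Sum>v\<in>V. l v *\<^sub>R v) \<bullet> u - (\<Sum>v\<in>V. l v) * (c \<bullet> u)"
    by (simp add: inner_diff_left right_diff_distrib sum_subtractf sum_distrib_right inner_sum_left)
  also have "\<dots> = (z - c) \<bullet> u + s"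
    using assms(2) l(2,3) by (simp add: inner_diff_left algebra_simps norm_eq_1)
  finally have height: "(\<Sum>v\<in>V. l v * ((v - c) \<bullet> u)) = (z - c) \<bullet> u + s" .
  have "(\<Sum>v\<in>V. l v * (g v - 2 * ((v - c) \<bullet> u)))
      = (\<Sum>v\<in>V. l v * g v) - 2 * (\<Sum>v\<in>V. l v * ((v - c) \<bullet> u))"
    by (simp add: algebra_simps sum_subtractf sum_distrib_left sum.distrib)
  then have "(\<Sum>v\<in>V. l v * (g v - 2 * ((v - c) \<bullet> u))) = \<alpha> - 2 * ((z - c) \<bullet> u + s)"
    by (simp add: height \<alpha>_def)
  moreover have shift: "\<And>a. (z + s *\<^sub>R u) + a *\<^sub>R u = z + (s + a) *\<^sub>R u"
    by (simp add: scaleR_add_left)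
  ultimately have Q2: "z + (s + (\<alpha> - 2 * ((z - c) \<bullet> u + s))) *\<^sub>R u
      \<in> convex hull ((\<lambda>v. v + (g v - 2 * ((v - c) \<bullet> u)) *\<^sub>R u) ` V)"
    using convex_combination_shear_mem[OF assms(1) l(1,2), of "\<lambda>v. g v - 2 * ((v - c) \<bullet> u)" u]
    by (simp only: l(3))
  have Q1: "z + (s + \<alpha>) *\<^sub>R u \<in> convex hull ((\<lambda>v. v + g v *\<^sub>R u) ` V)"
    using convex_combination_shear_mem[OF assms(1) l(1,2), of g u]
    by (simp only: l(3) shift \<alpha>_def[symmetric])
  have "s + (\<alpha> - 2 * ((z - c) \<bullet> u + s)) = \<alpha> - s - 2 * ((z - c) \<bullet> u)"
    by simp
  with Q1 Q2 show thesis
    by (intro that) (simp_all only: line_fiber_def mem_Collect_eq)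
qed

lemma sets_borel_convex_hull:
  fixes V :: "'a::euclidean_space set"
  shows "finite V \<Longrightarrow> convex hull V \<in> sets borel"
  by (simp add: borel_closed compact_imp_closed finite_imp_compact_convex_hull)

text \<open>If the chord of \<open>convex hull V\<close> on a line parallel to \<open>u\<close> has length \<open>d\<close>, the
  convex combinations representing its endpoints give chords of the two sheared hulls of lengths
  \<open>\<bar>a + d\<bar>\<close> and \<open>\<bar>a - d\<bar>\<close> for some \<open>a\<close>; these add up to at least \<open>2 d\<close>.\<close>
lemma emeasure_convex_hull_le_shears:
  fixes V :: "'a::euclidean_space set"
  assumes V: "finite V" and u: "norm u = 1"
  shows "2 * emeasure lborel (convex hull V)
    \<le> emeasure lborel (convex hull ((\<lambda>v. v + g v *\<^sub>R u) ` V))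
      + emeasure lborel (convex hull ((\<lambda>v. v + (g v - 2 * ((v - c) \<bullet> u)) *\<^sub>R u) ` V))"
proof (rule emeasure_le_by_line_fibers[OF u])
  let ?P = "convex hull V"
  let ?Q1 = "convex hull ((\<lambda>v. v + g v *\<^sub>R u) ` V)"
  let ?Q2 = "convex hull ((\<lambda>v. v + (g v - 2 * ((v - c) \<bullet> u)) *\<^sub>R u) ` V)"
  show borel: "?P \<in> sets borel" "?Q1 \<in> sets borel" "?Q2 \<in> sets borel"
    using V by (simp_all add: sets_borel_convex_hull)
  fix z
  show "2 * emeasure lborel (line_fiber u ?P z)
    \<le> emeasure lborel (line_fiber u ?Q1 z) + emeasure lborel (line_fiber u ?Q2 z)"
  proof (cases "line_fiber u ?P z = {}")
    case False
    have "compact ?P" "u \<noteq> 0"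
      using V u by (auto simp: finite_imp_compact_convex_hull)
    then obtain s2 s1 where I: "line_fiber u ?P z = {s2..s1}" "s2 \<le> s1"
      using line_fiber_Icc[OF _ convex_convex_hull _ False] by blast
    then have "z + s1 *\<^sub>R u \<in> ?P" "z + s2 *\<^sub>R u \<in> ?P"
      by (auto simp: line_fiber_def)
    obtain \<alpha>1 where
        \<alpha>1: "s1 + \<alpha>1 \<in> line_fiber u ?Q1 z" "\<alpha>1 - s1 - 2 * ((z - c) \<bullet> u) \<in> line_fiber u ?Q2 z"
      using line_fiber_convex_hull_shears[OF V u \<open>z + s1 *\<^sub>R u \<in> ?P\<close>] .
    obtain \<alpha>2 where
        \<alpha>2: "s2 + \<alpha>2 \<in> line_fiber u ?Q1 z" "\<alpha>2 - s2 - 2 * ((z - c) \<bullet> u) \<in> line_fiber u ?Q2 z"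
      using line_fiber_convex_hull_shears[OF V u \<open>z + s2 *\<^sub>R u \<in> ?P\<close>] .
    have "2 * emeasure lborel (line_fiber u ?P z) = ennreal (2 * (s1 - s2))"
      using ennreal_mult[of 2 "s1 - s2"] I by simp
    also have "\<dots> \<le> ennreal \<bar>(s1 + \<alpha>1) - (s2 + \<alpha>2)\<bar>
        + ennreal \<bar>(\<alpha>1 - s1 - 2 * ((z - c) \<bullet> u)) - (\<alpha>2 - s2 - 2 * ((z - c) \<bullet> u))\<bar>"
      unfolding ennreal_plus[OF abs_ge_zero abs_ge_zero, symmetric]
      by (rule ennreal_leI) (simp add: abs_if)
    also have "\<dots> \<le> emeasure lborel (line_fiber u ?Q1 z) + emeasure lborel (line_fiber u ?Q2 z)"
      by (intro add_mono dist_le_emeasure_line_fiber convex_convex_hull borel \<alpha>1 \<alpha>2)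
    finally show ?thesis .
  qed simp
qed

lemma emeasure_lborel_compact:
  fixes X :: "'a::euclidean_space set"
  assumes "compact X"
  shows "emeasure lborel X = ennreal (measure lebesgue X)"
proof -
  have "X \<in> sets borel" "X \<in> lmeasurable"
    using assms by (simp_all add: borel_closed compact_imp_closed lmeasurable_compact)
  then show ?thesis
    using emeasure_eq_measure2[of X lebesgue] by simp
qed

lemma measure_convex_hull_le_shears:
  fixes V :: "'a::euclidean_space set"
  assumes V: "finite V" and u: "norm u = 1"
  shows "2 * measure lebesgue (convex hull V)
    \<le> measure lebesgue (convex hull ((\<lambda>v. v + g v *\<^sub>R u) ` V))
      + measure lebesgue (convex hull ((\<lambda>v. v + (g v - 2 * ((v - c) \<bullet> u)) *\<^sub>R u) ` V))"
proof -
  have "compact (convex hull W)" if "finite W" for W :: "'a set"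
    using that by (rule finite_imp_compact_convex_hull)
  then have "ennreal (2 * measure lebesgue (convex hull V))
    \<le> ennreal (measure lebesgue (convex hull ((\<lambda>v. v + g v *\<^sub>R u) ` V))
      + measure lebesgue (convex hull ((\<lambda>v. v + (g v - 2 * ((v - c) \<bullet> u)) *\<^sub>R u) ` V)))"
    using emeasure_convex_hull_le_shears[OF V u, of g c] V
    by (simp add: emeasure_lborel_compact ennreal_mult ennreal_plus)
  then show ?thesis
    by (simp only: ennreal_le_iff[OF add_nonneg_nonneg[OF measure_nonneg measure_nonneg]])
qed

section \<open>The Steiner symmetral\<close>

definition proj_hyp :: "'a::real_inner \<Rightarrow> 'a \<Rightarrow> 'a \<Rightarrow> 'a" where
  "proj_hyp c u y = y - ((y - c) \<bullet> u) *\<^sub>R u"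

definition chord_length :: "'a::real_vector \<Rightarrow> 'a set \<Rightarrow> 'a \<Rightarrow> real" where
  "chord_length u K x = Sup (line_fiber u K x) - Inf (line_fiber u K x)"

definition chord_mid :: "'a::real_vector \<Rightarrow> 'a set \<Rightarrow> 'a \<Rightarrow> real" where
  "chord_mid u K x = (Sup (line_fiber u K x) + Inf (line_fiber u K x)) / 2"

definition steiner_symmetral :: "'a::euclidean_space \<Rightarrow> 'a \<Rightarrow> 'a set \<Rightarrow> 'a set" where
  "steiner_symmetral c u K =
    {x + t *\<^sub>R u | x t. x \<in> proj_hyp c u ` K \<and> \<bar>t\<bar> \<le> chord_length u K x / 2}"

lemma steiner_sym_eq_steiner_symmetral:
  "steiner_sym c a K = steiner_symmetral c (a /\<^sub>R norm a) K"
  by (simp add: steiner_sym_def steiner_symmetral_def proj_hyp_def chord_length_def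
      line_fiber_def Let_def)

lemma proj_hyp_add_inner: "proj_hyp c u y + ((y - c) \<bullet> u) *\<^sub>R u = y"
  by (simp add: proj_hyp_def)

lemma inner_add_scaleR_unit:
  "norm u = 1 \<Longrightarrow> (y + t *\<^sub>R u - c) \<bullet> u = (y - c) \<bullet> u + t"
  by (simp add: algebra_simps norm_eq_1)

lemma proj_hyp_add_scaleR:
  "norm u = 1 \<Longrightarrow> proj_hyp c u (y + t *\<^sub>R u) = proj_hyp c u y"
  by (simp add: proj_hyp_def inner_add_scaleR_unit algebra_simps norm_eq_1)

lemma inner_proj_hyp: "norm u = 1 \<Longrightarrow> (proj_hyp c u y - c) \<bullet> u = 0"
  by (simp add: proj_hyp_def algebra_simps norm_eq_1)

lemma proj_hyp_idem: "norm u = 1 \<Longrightarrow> proj_hyp c u (proj_hyp c u y) = proj_hyp c u y"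
  by (simp add: proj_hyp_def[of c u "proj_hyp c u y"] inner_proj_hyp)

lemma proj_hyp_point_reflect: "proj_hyp c u (2 *\<^sub>R c - y) = 2 *\<^sub>R c - proj_hyp c u y"
  by (simp add: proj_hyp_def algebra_simps)

lemma mem_line_fiber_proj_hyp:
  "norm u = 1 \<Longrightarrow> s \<in> line_fiber u K z \<longleftrightarrow> (z - c) \<bullet> u + s \<in> line_fiber u K (proj_hyp c u z)"
  by (simp add: line_fiber_def proj_hyp_def algebra_simps)

lemma line_fiber_proj_hyp_nonempty: "y \<in> K \<Longrightarrow> line_fiber u K (proj_hyp c u y) \<noteq> {}"
  using proj_hyp_add_inner[of c u y] unfolding line_fiber_def by (metis empty_iff mem_Collect_eq)

lemma mem_steiner_symmetral:
  assumes "norm u = 1"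
  shows "v \<in> steiner_symmetral c u K \<longleftrightarrow>
    proj_hyp c u v \<in> proj_hyp c u ` K \<and> \<bar>(v - c) \<bullet> u\<bar> \<le> chord_length u K (proj_hyp c u v) / 2"
proof
  assume "v \<in> steiner_symmetral c u K"
  then obtain y t where "v = proj_hyp c u y + t *\<^sub>R u" "y \<in> K"
      "\<bar>t\<bar> \<le> chord_length u K (proj_hyp c u y) / 2"
    unfolding steiner_symmetral_def by blast
  then show "proj_hyp c u v \<in> proj_hyp c u ` K \<and> \<bar>(v - c) \<bullet> u\<bar> \<le> chord_length u K (proj_hyp c u v) / 2"
    using assms by (simp add: proj_hyp_add_scaleR proj_hyp_idem inner_add_scaleR_unit inner_proj_hyp)
next
  assume "proj_hyp c u v \<in> proj_hyp c u ` K \<and> \<bar>(v - c) \<bullet> u\<bar> \<le> chord_length u K (proj_hyp c u v) / 2"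
  then show "v \<in> steiner_symmetral c u K"
    unfolding steiner_symmetral_def using proj_hyp_add_inner[of c u v] by force
qed

lemma chord_mid_add_mem:
  fixes K :: "'a::euclidean_space set"
  assumes "compact K" "convex K" "u \<noteq> 0" "line_fiber u K x \<noteq> {}"
    and "\<bar>t\<bar> \<le> chord_length u K x / 2"
  shows "x + (chord_mid u K x + t) *\<^sub>R u \<in> K"
proof -
  obtain lo hi where I: "line_fiber u K x = {lo..hi}" "lo \<le> hi"
    using line_fiber_Icc[OF assms(1-4)] .
  then have "chord_length u K x = hi - lo" "chord_mid u K x = (hi + lo) / 2"
    by (simp_all add: chord_length_def chord_mid_def)
  then have "chord_mid u K x + t \<in> {lo..hi}"
    using assms(5) unfolding abs_le_iff atLeastAtMost_iff by (simp add: field_simps)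
  then have "chord_mid u K x + t \<in> line_fiber u K x"
    using I(1) by simp
  then show ?thesis by (simp add: line_fiber_def)
qed

lemma line_fiber_point_reflect:
  assumes "sym_about c K"
  shows "line_fiber u K (2 *\<^sub>R c - x) = uminus ` line_fiber u K x"
proof (rule set_eqI)
  fix s
  have "s \<in> line_fiber u K (2 *\<^sub>R c - x) \<longleftrightarrow> - s \<in> line_fiber u K x"
    using sym_about_mem_iff[OF assms, of "x + (- s) *\<^sub>R u"] by (simp add: line_fiber_def algebra_simps)
  then show "s \<in> line_fiber u K (2 *\<^sub>R c - x) \<longleftrightarrow> s \<in> uminus ` line_fiber u K x"
    by (metis add.inverse_inverse image_iff)
qed

lemma chord_mid_point_reflect:
  assumes "sym_about c K"
  shows "chord_mid u K (2 *\<^sub>R c - x) = - chord_mid u K x"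
proof -
  have "Inf (uminus ` line_fiber u K x) = - Sup (line_fiber u K x)"
    by (simp add: Inf_real_def image_image)
  moreover have "Inf (line_fiber u K x) = - Sup (uminus ` line_fiber u K x)"
    by (simp add: Inf_real_def)
  ultimately show ?thesis
    unfolding chord_mid_def line_fiber_point_reflect[OF assms] by (simp add: field_simps)
qed

lemma proj_hyp_mem_image:
  "norm u = 1 \<Longrightarrow> z + s *\<^sub>R u \<in> K \<Longrightarrow> proj_hyp c u z \<in> proj_hyp c u ` K"
  by (metis proj_hyp_add_scaleR image_eqI)

lemma line_fiber_proj_hyp_Icc:
  fixes K :: "'a::euclidean_space set"
  assumes K: "compact K" "convex K" and u: "norm u = 1" and ne: "line_fiber u K z \<noteq> {}"
  obtains lo hi where "line_fiber u K (proj_hyp c u z) = {lo..hi}" "lo \<le> hi"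
proof -
  have u0: "u \<noteq> 0"
    using u by auto
  obtain s where "z + s *\<^sub>R u \<in> K"
    using ne by (auto simp: line_fiber_def)
  then have "line_fiber u K (proj_hyp c u (z + s *\<^sub>R u)) \<noteq> {}"
    by (rule line_fiber_proj_hyp_nonempty)
  then have "line_fiber u K (proj_hyp c u z) \<noteq> {}"
    by (simp add: proj_hyp_add_scaleR[OF u])
  then obtain lo hi where "line_fiber u K (proj_hyp c u z) = {lo..hi}" "lo \<le> hi"
    using line_fiber_Icc[OF K u0] by blast
  then show thesis
    by (rule that)
qed

lemma emeasure_line_fiber_le_chord_length:
  fixes K :: "'a::euclidean_space set"
  assumes K: "compact K" "convex K" and u: "norm u = 1"
  shows "emeasure lborel (line_fiber u K z) \<le> ennreal (chord_length u K (proj_hyp c u z))"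
proof (cases "line_fiber u K z = {}")
  case False
  then obtain lo hi where I: "line_fiber u K (proj_hyp c u z) = {lo..hi}" "lo \<le> hi"
    using line_fiber_proj_hyp_Icc[OF K u] by blast
  let ?h = "(z - c) \<bullet> u"
  have "line_fiber u K z \<subseteq> {lo - ?h .. hi - ?h}"
  proof
    fix s assume "s \<in> line_fiber u K z"
    then have "?h + s \<in> {lo..hi}"
      using mem_line_fiber_proj_hyp[OF u, of s K z c] I(1) by simp
    then show "s \<in> {lo - ?h .. hi - ?h}"
      by auto
  qed
  then have "emeasure lborel (line_fiber u K z) \<le> emeasure lborel {lo - ?h .. hi - ?h}"
    by (rule emeasure_mono) simp
  then show ?thesis
    using I by (simp add: chord_length_def)
qed simp

lemma Icc_subset_line_fiber_steiner_symmetral: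
  fixes K :: "'a::euclidean_space set" and c :: 'a
  assumes K: "compact K" "convex K" and u: "norm u = 1" and ne: "line_fiber u K z \<noteq> {}"
  defines "L \<equiv> chord_length u K (proj_hyp c u z)"
  defines "a \<equiv> - ((z - c) \<bullet> u) - L / 2"
  shows "0 \<le> L" and "{a .. a + L} \<subseteq> line_fiber u (steiner_symmetral c u K) z"
proof -
  obtain s0 where "z + s0 *\<^sub>R u \<in> K"
    using ne by (auto simp: line_fiber_def)
  then have x: "proj_hyp c u z \<in> proj_hyp c u ` K"
    by (rule proj_hyp_mem_image[OF u])
  obtain lo hi where "line_fiber u K (proj_hyp c u z) = {lo..hi}" "lo \<le> hi"
    using line_fiber_proj_hyp_Icc[OF K u ne] .
  then show "0 \<le> L"
    by (simp add: L_def chord_length_def)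
  show "{a .. a + L} \<subseteq> line_fiber u (steiner_symmetral c u K) z"
  proof
    fix s assume "s \<in> {a .. a + L}"
    then have "\<bar>(z - c) \<bullet> u + s\<bar> \<le> L / 2"
      unfolding a_def atLeastAtMost_iff abs_le_iff by (simp add: field_simps)
    then show "s \<in> line_fiber u (steiner_symmetral c u K) z"
      using x by (simp add: line_fiber_def mem_steiner_symmetral[OF u] proj_hyp_add_scaleR[OF u]
          inner_add_scaleR_unit[OF u] L_def)
  qed
qed

lemma emeasure_le_steiner_symmetral:
  fixes K :: "'a::euclidean_space set"
  assumes K: "compact K" "convex K" and u: "norm u = 1"
    and S: "steiner_symmetral c u K \<in> sets lebesgue"
  shows "emeasure lebesgue K \<le> emeasure lebesgue (steiner_symmetral c u K)"
proof -
  obtain T where T: "T \<in> sets borel" "steiner_symmetral c u K \<subseteq> T"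
      "emeasure lebesgue (steiner_symmetral c u K) = emeasure lborel T"
    using completion_upper[OF S] by auto
  have Kb: "K \<in> sets borel"
    using K by (simp add: borel_closed compact_imp_closed)
  have "emeasure lborel K \<le> emeasure lborel T"
  proof (rule emeasure_mono_line_fibers[OF u T(1) Kb])
    fix z
    let ?L = "chord_length u K (proj_hyp c u z)"
    let ?a = "- ((z - c) \<bullet> u) - ?L / 2"
    show "emeasure lborel (line_fiber u K z) \<le> emeasure lborel (line_fiber u T z)"
    proof (cases "line_fiber u K z = {}")
      case False
      note Icc = Icc_subset_line_fiber_steiner_symmetral[OF K u False, of c]
      have "emeasure lborel (line_fiber u K z) \<le> ennreal ?L"
        by (rule emeasure_line_fiber_le_chord_length[OF K u])
      also have "\<dots> = emeasure lborel {?a .. ?a + ?L}"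
        using Icc(1) by simp
      also have "\<dots> \<le> emeasure lborel (line_fiber u T z)"
        using Icc(2) T(2) sets_borel_line_fiber[OF T(1)]
        by (intro emeasure_mono) (auto simp: line_fiber_def)
      finally show ?thesis .
    qed simp
  qed
  then show ?thesis
    using T Kb by simp
qed

definition hyp_reflect :: "'a::real_inner \<Rightarrow> 'a \<Rightarrow> 'a \<Rightarrow> 'a" where
  "hyp_reflect c u v = v - (2 * ((v - c) \<bullet> u)) *\<^sub>R u"

definition steiner_shear :: "'a::euclidean_space \<Rightarrow> 'a \<Rightarrow> 'a set \<Rightarrow> 'a \<Rightarrow> 'a" where
  "steiner_shear c u K v = v + chord_mid u K (proj_hyp c u v) *\<^sub>R u"

lemma steiner_shear_hyp_reflect:
  "norm u = 1 \<Longrightarrow> steiner_shear c u K (hyp_reflect c u v)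
    = v + (chord_mid u K (proj_hyp c u v) - 2 * ((v - c) \<bullet> u)) *\<^sub>R u"
  using proj_hyp_add_scaleR[of u c v "- (2 * ((v - c) \<bullet> u))"]
  by (simp add: steiner_shear_def hyp_reflect_def algebra_simps)

lemma hyp_reflect_mem_steiner_symmetral:
  assumes u: "norm u = 1" and v: "v \<in> steiner_symmetral c u K"
  shows "hyp_reflect c u v \<in> steiner_symmetral c u K"
proof -
  have "v + (- (2 * ((v - c) \<bullet> u))) *\<^sub>R u \<in> steiner_symmetral c u K"
    using v unfolding mem_steiner_symmetral[OF u] proj_hyp_add_scaleR[OF u] inner_add_scaleR_unit[OF u]
    by simp
  then show ?thesis
    by (simp add: hyp_reflect_def)
qed

lemma steiner_shear_mem:
  fixes K :: "'a::euclidean_space set"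
  assumes K: "compact K" "convex K" and u: "norm u = 1" and v: "v \<in> steiner_symmetral c u K"
  shows "steiner_shear c u K v \<in> K"
proof -
  let ?x = "proj_hyp c u v"
  have x: "?x \<in> proj_hyp c u ` K" and h: "\<bar>(v - c) \<bullet> u\<bar> \<le> chord_length u K ?x / 2"
    using v by (simp_all add: mem_steiner_symmetral[OF u])
  from x obtain y where "y \<in> K" "?x = proj_hyp c u y"
    by blast
  then have "line_fiber u K ?x \<noteq> {}"
    using line_fiber_proj_hyp_nonempty by metis
  moreover have "u \<noteq> 0"
    using u by auto
  ultimately have "?x + (chord_mid u K ?x + (v - c) \<bullet> u) *\<^sub>R u \<in> K"
    using chord_mid_add_mem[OF K _ _ h] by blast
  also have "?x + (chord_mid u K ?x + (v - c) \<bullet> u) *\<^sub>R u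
      = (?x + ((v - c) \<bullet> u) *\<^sub>R u) + chord_mid u K ?x *\<^sub>R u"
    by (simp add: scaleR_add_left ac_simps)
  also have "\<dots> = steiner_shear c u K v"
    by (simp only: proj_hyp_add_inner steiner_shear_def)
  finally show ?thesis .
qed

lemma steiner_shear_point_reflect:
  "sym_about c K \<Longrightarrow> steiner_shear c u K (2 *\<^sub>R c - v) = 2 *\<^sub>R c - steiner_shear c u K v"
  by (simp add: steiner_shear_def proj_hyp_point_reflect chord_mid_point_reflect algebra_simps)

lemma hyp_reflect_point_reflect: "hyp_reflect c u (2 *\<^sub>R c - v) = 2 *\<^sub>R c - hyp_reflect c u v"
  by (simp add: hyp_reflect_def algebra_simps)

lemma sym_polytope_convex_hull_image:
  fixes V :: "'a::euclidean_space set" and f :: "'a \<Rightarrow> 'a"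
  assumes "finite V" "card V \<le> m" "\<And>v. v \<in> V \<Longrightarrow> 2 *\<^sub>R c - v \<in> V"
    and "\<And>v. f (2 *\<^sub>R c - v) = 2 *\<^sub>R c - f v"
  shows "sym_polytope m c (convex hull (f ` V))"
proof (rule sym_polytope_convex_hull)
  show "finite (f ` V)"
    using assms(1) by simp
  show "card (f ` V) \<le> m"
    using card_image_le[OF assms(1), of f] assms(2) by linarith
  show "2 *\<^sub>R c - w \<in> f ` V" if w: "w \<in> f ` V" for w
  proof -
    obtain v where "v \<in> V" "w = f v"
      using w by blast
    then show ?thesis
      using assms(3,4) by (metis image_eqI)
  qed
qed

lemma steiner_symmetral_sym_polytope_transfer:
  fixes K P :: "'a::euclidean_space set"
  assumes K: "compact K" "convex K" "sym_about c K" and u: "norm u = 1"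
    and P: "sym_polytope m c P" "P \<subseteq> steiner_symmetral c u K"
  shows "\<exists>Q. sym_polytope m c Q \<and> Q \<subseteq> K \<and> measure lebesgue P \<le> measure lebesgue Q"
proof -
  note V = sym_polytope_vertices[OF P(1)]
  have "vertices P \<subseteq> P"
    using hull_subset[of "vertices P" convex] unfolding V(3) .
  then have VS: "vertices P \<subseteq> steiner_symmetral c u K"
    using P(2) by (rule order_trans)
  define g where "g v = chord_mid u K (proj_hyp c u v)" for v
  define Q1 where "Q1 = convex hull (steiner_shear c u K ` vertices P)"
  define Q2 where "Q2 = convex hull ((steiner_shear c u K \<circ> hyp_reflect c u) ` vertices P)"
  have "sym_polytope m c Q1"
    unfolding Q1_def
    by (rule sym_polytope_convex_hull_image[OF V(1,2)])
      (simp_all add: V(4) steiner_shear_point_reflect[OF K(3)])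
  moreover have "sym_polytope m c Q2"
    unfolding Q2_def
    by (rule sym_polytope_convex_hull_image[OF V(1,2)])
      (simp_all add: V(4) steiner_shear_point_reflect[OF K(3)] hyp_reflect_point_reflect)
  moreover have "steiner_shear c u K ` vertices P \<subseteq> K"
    using VS steiner_shear_mem[OF K(1,2) u] by blast
  moreover have "(steiner_shear c u K \<circ> hyp_reflect c u) ` vertices P \<subseteq> K"
    using VS steiner_shear_mem[OF K(1,2) u] hyp_reflect_mem_steiner_symmetral[OF u] by auto
  ultimately have Q: "sym_polytope m c Q1" "sym_polytope m c Q2" "Q1 \<subseteq> K" "Q2 \<subseteq> K"
    unfolding Q1_def Q2_def using K(2) by (simp_all add: hull_minimal)
  have "Q1 = convex hull ((\<lambda>v. v + g v *\<^sub>R u) ` vertices P)"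
    unfolding Q1_def g_def steiner_shear_def[abs_def] ..
  moreover have "Q2 = convex hull ((\<lambda>v. v + (g v - 2 * ((v - c) \<bullet> u)) *\<^sub>R u) ` vertices P)"
    unfolding Q2_def g_def
    by (intro arg_cong[where f = "\<lambda>X. convex hull X"] image_cong)
      (simp_all add: steiner_shear_hyp_reflect[OF u])
  ultimately have "2 * measure lebesgue P \<le> measure lebesgue Q1 + measure lebesgue Q2"
    using measure_convex_hull_le_shears[OF V(1) u, of g c] unfolding V(3) by simp
  then have "measure lebesgue P \<le> measure lebesgue Q1 \<or> measure lebesgue P \<le> measure lebesgue Q2"
    by linarith
  then show ?thesis
    using Q by blast
qed

lemma psi_le_psi_transfer:
  fixes K S :: "'a::euclidean_space set"
  assumes K: "K \<in> lmeasurable" "0 < measure lebesgue K"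
    and vol: "S \<in> sets lebesgue \<Longrightarrow> emeasure lebesgue K \<le> emeasure lebesgue S"
    and transfer: "\<And>P. sym_polytope m c P \<Longrightarrow> P \<subseteq> S
      \<Longrightarrow> \<exists>Q. sym_polytope m c Q \<and> Q \<subseteq> K \<and> measure lebesgue P \<le> measure lebesgue Q"
  shows "psi m c S \<le> psi m c K"
proof -
  define ratios where "ratios T = {measure lebesgue P / measure lebesgue T | P. sym_polytope m c P \<and> P \<subseteq> T}"
    for T :: "'a set"
  have zero: "0 \<in> ratios T" for T
    unfolding ratios_def using sym_polytope_empty by force
  have "bdd_above (ratios K)"
  proof (rule bdd_aboveI)
    fix r assume "r \<in> ratios K"
    then obtain P where P: "r = measure lebesgue P / measure lebesgue K" "sym_polytope m c P" "P \<subseteq> K"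
      unfolding ratios_def by blast
    then have "P \<in> lmeasurable"
      by (simp add: sym_polytope_def lmeasurable_compact polytope_imp_compact)
    then have "measure lebesgue P \<le> measure lebesgue K"
      using measure_mono_fmeasurable[OF P(3) _ K(1)] by (simp add: fmeasurable_def)
    then show "r \<le> 1"
      using K(2) P(1) by simp
  qed
  moreover have "\<exists>r'\<in>ratios K. r \<le> r'" if r: "r \<in> ratios S" for r
  proof -
    obtain P where P: "r = measure lebesgue P / measure lebesgue S" "sym_polytope m c P" "P \<subseteq> S"
      using r unfolding ratios_def by blast
    show ?thesis
    proof (cases "measure lebesgue S = 0")
      case False
      then have "S \<in> sets lebesgue" "emeasure lebesgue S \<noteq> \<infinity>"
        using measure_notin_sets by (auto simp: measure_def)
      then have KS: "measure lebesgue K \<le> measure lebesgue S"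
        using vol emeasure_eq_measure2[OF K(1)] by (simp add: emeasure_eq_ennreal_measure)
      obtain Q where Q: "sym_polytope m c Q" "Q \<subseteq> K" "measure lebesgue P \<le> measure lebesgue Q"
        using transfer[OF P(2,3)] by blast
      have "r \<le> measure lebesgue Q / measure lebesgue S"
        using P(1) Q(3) K(2) KS by (simp add: divide_right_mono)
      also have "\<dots> \<le> measure lebesgue Q / measure lebesgue K"
        using K(2) KS by (simp add: divide_left_mono)
      finally show ?thesis
        using Q unfolding ratios_def by blast
    qed (use P(1) zero in auto)
  qed
  ultimately have "Sup (ratios S) \<le> Sup (ratios K)"
    using zero by (intro cSup_mono) auto
  then show ?thesis
    by (simp add: psi_eq_Sup_sym_polytope ratios_def)
qed

lemma convex_body_measure_pos:
  fixes K :: "'a::euclidean_space set"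
  assumes "convex_body K"
  shows "0 < measure lebesgue K"
proof -
  obtain x e where "0 < e" "ball x e \<subseteq> K"
    using assms by (auto simp: convex_body_def mem_interior)
  moreover have "K \<in> lmeasurable"
    using assms by (simp add: convex_body_def lmeasurable_compact)
  ultimately have "measure lebesgue (ball x e) \<le> measure lebesgue K"
    by (intro measure_mono_fmeasurable) auto
  moreover have "0 < measure lebesgue (ball x e)"
    using \<open>0 < e\<close> content_ball_pos by simp
  ultimately show ?thesis by linarith
qed

theorem lemma1:
  fixes K :: "'a::euclidean_space set" and c a :: 'a and m :: nat
  assumes "convex_body K" and "sym_about c K" and "a \<noteq> 0"
  shows "psi m c K \<ge> psi m c (steiner_sym c a K)"
proof -
  define u where "u = a /\<^sub>R norm a"
  have u: "norm u = 1"
    using assms(3) by (simp add: u_def)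
  have K: "compact K" "convex K" "K \<in> lmeasurable"
    using assms(1) by (auto simp: convex_body_def lmeasurable_compact)
  have "psi m c (steiner_symmetral c u K) \<le> psi m c K"
  proof (rule psi_le_psi_transfer[OF K(3) convex_body_measure_pos[OF assms(1)]])
    show "emeasure lebesgue K \<le> emeasure lebesgue (steiner_symmetral c u K)"
      if "steiner_symmetral c u K \<in> sets lebesgue"
      by (rule emeasure_le_steiner_symmetral[OF K(1,2) u that])
    show "\<exists>Q. sym_polytope m c Q \<and> Q \<subseteq> K \<and> measure lebesgue P \<le> measure lebesgue Q"
      if "sym_polytope m c P" "P \<subseteq> steiner_symmetral c u K" for P
      by (rule steiner_symmetral_sym_polytope_transfer[OF K(1,2) assms(2) u that])
  qed
  then show ?thesis
    by (simp add: steiner_sym_eq_steiner_symmetral u_def)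
qed

end
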